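(* Let $\mathbf A$ be a complete residuated lattice and $I$, $J$ arbitrary sets. (i) A mapping $\phi\colon A^I\to A^J$ is a $\phi$-type mapping if and only if there is a fuzzy relation $R\colon I\times J\to A$ with $\phi=\phi_R$; a mapping $\rho\colon A^J\to A^I$ is a $\rho$-type mapping if and only if there is a fuzzy relation $R\colon I\times J\to A$ with $\rho=\rho_R$. Moreover, a $\phi$-type mapping $\phi$ and a $\rho$-type mapping $\rho$ form a Galois connection between $A^I$ and $A^J$ if and only if there is a single fuzzy relation $R$ with $\phi=\phi_R$ and $\rho=\rho_R$. (ii) A mapping $\delta\colon A^I\to A^J$ is a $\delta$-type mapping if and only if $\delta=\delta_R$ for some fuzzy relation $R\colon I\times J\to A$; a mapping $\epsilon\colon A^J\to A^I$ is a $\delta$-type mapping if and only if $\epsilon=\epsilon_R$ for some fuzzy relation $R\colon I\times J\to A$. Moreover, $\delta$-type mappings $\delta\colon A^I\to A^J$ and $\epsilon\colon A^J\to A^I$ form a reversed Galois connection if and only if there is a single fuzzy relation $R$ with $\delta=\delta_R$ and $\epsilon=\epsilon_R$.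
   Context: A residuated lattice is an algebra $\mathbf A=(A;\vee,\wedge,\cdot,\rightarrow,0,1)$ such that $(A;\vee,\wedge,0,1)$ is a bounded lattice, $(A;\cdot,1)$ is a commutative monoid, and $x\cdot y\le z$ iff $x\le y\rightarrow z$; complete if the lattice reduct is complete. $A^K$ carries componentwise operations and order; $d^K$ is the constant element with value $d\in A$. A fuzzy relation is a map $R\colon I\times J\to A$. Operators: $\phi_R(x)(j)=\bigwedge_{i\in I}(R(i,j)\rightarrow x(i))$ ($A^I\to A^J$); $\rho_R(y)(i)=\bigvee_{j\in J}(R(i,j)\cdot y(j))$ ($A^J\to A^I$); $\delta_R(x)(j)=\bigwedge_{i\in I}(x(i)\rightarrow R(i,j))$ ($A^I\to A^J$); $\epsilon_R(y)(i)=\bigwedge_{j\in J}(y(j)\rightarrow R(i,j))$ ($A^J\to A^I$). Galois connection: monotone $\phi,\rho$ with $y\le\phi(x)$ iff $\rho(y)\le x$. Reversed Galois connection: antitone $\delta,\epsilon$ with $y\le\delta(x)$ iff $x\le\epsilon(y)$. For sets $K,L$: $\phi\colon A^K\to A^L$ is $\phi$-type if infima preserving ($\phi(\bigwedge M)=\bigwedge\phi(M)$ for all $M$) and $d^L\rightarrow\phi(x)=\phi(d^K\rightarrow x)$ for all $d\in A$; $\rho\colon A^L\to A^K$ is $\rho$-type if suprema preserving and $d^K\cdot\rho(x)=\rho(d^L\cdot x)$ for all $d$; $\delta\colon A^K\to A^L$ is $\delta$-type if suprema reversing ($\delta(\bigvee M)=\bigwedge\delta(M)$) and $d^L\rightarrow\delta(x)=\delta(d^K\cdot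 x)$ for all $d$. *)

theory Defs
  imports Main
begin

class complete_residuated_lattice = complete_lattice + comm_monoid_mult +
  fixes residuum :: "'a \<Rightarrow> 'a \<Rightarrow> 'a" (infixr "\<rightarrow>\<^sub>r" 60)
  assumes one_is_top: "1 = top"
  assumes residuation: "x * y \<le> z \<longleftrightarrow> x \<le> y \<rightarrow>\<^sub>r z"

text \<open>A^I is modelled as the function type 'i => 'a with the pointwise (library) order.\<close>

definition phiR :: "('i \<Rightarrow> 'j \<Rightarrow> 'a::complete_residuated_lattice) \<Rightarrow> ('i \<Rightarrow> 'a) \<Rightarrow> ('j \<Rightarrow> 'a)" where
  "phiR R x = (\<lambda>j. INF i. R i j \<rightarrow>\<^sub>r x i)"

definition rhoR :: "('i \<Rightarrow> 'j \<Rightarrow> 'a::complete_residuated_lattice) \<Rightarrow> ('j \<Rightarrow> 'a) \<Rightarrow> ('i \<Rightarrow> 'a)" where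
  "rhoR R y = (\<lambda>i. SUP j. R i j * y j)"

definition deltaR :: "('i \<Rightarrow> 'j \<Rightarrow> 'a::complete_residuated_lattice) \<Rightarrow> ('i \<Rightarrow> 'a) \<Rightarrow> ('j \<Rightarrow> 'a)" where
  "deltaR R x = (\<lambda>j. INF i. x i \<rightarrow>\<^sub>r R i j)"

definition epsR :: "('i \<Rightarrow> 'j \<Rightarrow> 'a::complete_residuated_lattice) \<Rightarrow> ('j \<Rightarrow> 'a) \<Rightarrow> ('i \<Rightarrow> 'a)" where
  "epsR R y = (\<lambda>i. INF j. y j \<rightarrow>\<^sub>r R i j)"

definition phi_type :: "(('k \<Rightarrow> 'a::complete_residuated_lattice) \<Rightarrow> ('l \<Rightarrow> 'a)) \<Rightarrow> bool" where
  "phi_type \<phi> \<longleftrightarrow> (\<forall>M. \<phi> (Inf M) = Inf (\<phi> ` M))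
     \<and> (\<forall>d x. (\<lambda>l. d \<rightarrow>\<^sub>r \<phi> x l) = \<phi> (\<lambda>k. d \<rightarrow>\<^sub>r x k))"

definition rho_type :: "(('l \<Rightarrow> 'a::complete_residuated_lattice) \<Rightarrow> ('k \<Rightarrow> 'a)) \<Rightarrow> bool" where
  "rho_type \<rho> \<longleftrightarrow> (\<forall>M. \<rho> (Sup M) = Sup (\<rho> ` M))
     \<and> (\<forall>d x. (\<lambda>k. d * \<rho> x k) = \<rho> (\<lambda>l. d * x l))"

definition delta_type :: "(('k \<Rightarrow> 'a::complete_residuated_lattice) \<Rightarrow> ('l \<Rightarrow> 'a)) \<Rightarrow> bool" where
  "delta_type \<delta> \<longleftrightarrow> (\<forall>M. \<delta> (Sup M) = Inf (\<delta> ` M))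
     \<and> (\<forall>d x. (\<lambda>l. d \<rightarrow>\<^sub>r \<delta> x l) = \<delta> (\<lambda>k. d * x k))"

definition galois_conn :: "(('i \<Rightarrow> 'a::complete_lattice) \<Rightarrow> ('j \<Rightarrow> 'a)) \<Rightarrow> (('j \<Rightarrow> 'a) \<Rightarrow> ('i \<Rightarrow> 'a)) \<Rightarrow> bool" where
  "galois_conn \<phi> \<rho> \<longleftrightarrow> mono \<phi> \<and> mono \<rho> \<and> (\<forall>x y. y \<le> \<phi> x \<longleftrightarrow> \<rho> y \<le> x)"

definition rev_galois_conn :: "(('i \<Rightarrow> 'a::complete_lattice) \<Rightarrow> ('j \<Rightarrow> 'a)) \<Rightarrow> (('j \<Rightarrow> 'a) \<Rightarrow> ('i \<Rightarrow> 'a)) \<Rightarrow> bool" where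
  "rev_galois_conn \<delta> \<epsilon> \<longleftrightarrow> antimono \<delta> \<and> antimono \<epsilon> \<and> (\<forall>x y. y \<le> \<delta> x \<longleftrightarrow> x \<le> \<epsilon> y)"

end

theory Submission
  imports Defs
begin

(* Hence a
       rho-type map (resp. delta-type map) is determined by its values on atoms, and
       R i j = rho (atom j) i  (resp.  R i j = delta (atom i) j)  represents it.
   (4) A phi-type map has a left adjoint, which is rho-type and hence equals rhoR R;
       since rhoR R is left adjoint to phiR R, uniqueness of right adjoints gives
       phi = phiR R.  Conversely the relational operators have the required types, and
       the Galois-connection statements follow from uniqueness of adjoints. *)

section \<open>Algebra of complete residuated lattices\<close>

context complete_residuated_lattice
begin

lemma eq_by_lower_bounds: "(\<And>z. z \<le> a \<longleftrightarrow> z \<le> b) \<Longrightarrow> a = b"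
  by (meson order.antisym order.refl)

lemma residuum_INF: "a \<rightarrow>\<^sub>r (INF s\<in>S. f s) = (INF s\<in>S. a \<rightarrow>\<^sub>r f s)"
  by (rule eq_by_lower_bounds) (simp add: residuation[symmetric] le_INF_iff)

lemma mult_SUP: "a * (SUP s\<in>S. f s) = (SUP s\<in>S. a * f s)"
proof -
  have "a * (SUP s\<in>S. f s) \<le> z \<longleftrightarrow> (SUP s\<in>S. a * f s) \<le> z" for z
    by (simp add: mult.commute[of a] residuation SUP_le_iff)
  then show ?thesis by (meson order.antisym order.refl)
qed

lemma SUP_residuum: "(SUP s\<in>S. f s) \<rightarrow>\<^sub>r b = (INF s\<in>S. f s \<rightarrow>\<^sub>r b)"
proof (rule eq_by_lower_bounds)
  fix z
  have "z \<le> (SUP s\<in>S. f s) \<rightarrow>\<^sub>r b \<longleftrightarrow> z * (SUP s\<in>S. f s) \<le> b" by (simp add: residuation)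
  also have "\<dots> \<longleftrightarrow> (\<forall>s\<in>S. z * f s \<le> b)" by (simp add: mult_SUP SUP_le_iff)
  also have "\<dots> \<longleftrightarrow> (\<forall>s\<in>S. z \<le> f s \<rightarrow>\<^sub>r b)" by (simp add: residuation)
  finally show "z \<le> (SUP s\<in>S. f s) \<rightarrow>\<^sub>r b \<longleftrightarrow> z \<le> (INF s\<in>S. f s \<rightarrow>\<^sub>r b)"
    by (simp add: le_INF_iff)
qed

lemma residuum_curry: "(a * b) \<rightarrow>\<^sub>r c = a \<rightarrow>\<^sub>r (b \<rightarrow>\<^sub>r c)"
  by (rule eq_by_lower_bounds) (simp add: residuation[symmetric] mult.assoc)

lemma residuum_exchange: "a \<rightarrow>\<^sub>r (b \<rightarrow>\<^sub>r c) = b \<rightarrow>\<^sub>r (a \<rightarrow>\<^sub>r c)"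
  by (metis residuum_curry mult.commute)

lemma mult_bot: "x * bot = bot"
  by (metis bot.extremum bot_unique mult.commute residuation)

end

lemma scale_le_iff_le_residuum:
  "((\<lambda>k. d * f k) \<le> g) \<longleftrightarrow> (f \<le> (\<lambda>k. d \<rightarrow>\<^sub>r (g k :: 'a::complete_residuated_lattice)))"
  unfolding le_fun_def by (metis mult.commute residuation)

section \<open>Adjunctions between complete lattices\<close>

lemma galois_conn_iff_adjoint:
  fixes \<phi> :: "('i \<Rightarrow> 'a::complete_lattice) \<Rightarrow> ('j \<Rightarrow> 'a)" and \<rho> :: "('j \<Rightarrow> 'a) \<Rightarrow> ('i \<Rightarrow> 'a)"
  shows "galois_conn \<phi> \<rho> \<longleftrightarrow> (\<forall>x y. y \<le> \<phi> x \<longleftrightarrow> \<rho> y \<le> x)"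
proof
  assume adj: "\<forall>x y. y \<le> \<phi> x \<longleftrightarrow> \<rho> y \<le> x"
  have "mono \<phi>" by (rule monoI) (meson adj order.refl order.trans)
  moreover have "mono \<rho>" by (rule monoI) (meson adj order.refl order.trans)
  ultimately show "galois_conn \<phi> \<rho>" using adj by (simp add: galois_conn_def)
qed (simp add: galois_conn_def)

lemma rev_galois_conn_iff_adjoint:
  fixes \<delta> :: "('i \<Rightarrow> 'a::complete_lattice) \<Rightarrow> ('j \<Rightarrow> 'a)" and \<epsilon> :: "('j \<Rightarrow> 'a) \<Rightarrow> ('i \<Rightarrow> 'a)"
  shows "rev_galois_conn \<delta> \<epsilon> \<longleftrightarrow> (\<forall>x y. y \<le> \<delta> x \<longleftrightarrow> x \<le> \<epsilon> y)"
proof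
  assume adj: "\<forall>x y. y \<le> \<delta> x \<longleftrightarrow> x \<le> \<epsilon> y"
  have "antimono \<delta>" by (rule antimonoI) (meson adj order.refl order.trans)
  moreover have "antimono \<epsilon>" by (rule antimonoI) (meson adj order.refl order.trans)
  ultimately show "rev_galois_conn \<delta> \<epsilon>" using adj by (simp add: rev_galois_conn_def)
qed (simp add: rev_galois_conn_def)

lemma left_adjoint_unique:
  fixes \<rho> \<rho>' :: "'b::order \<Rightarrow> 'c::order"
  assumes "\<And>x y. y \<le> \<phi> x \<longleftrightarrow> \<rho> y \<le> x" "\<And>x y. y \<le> \<phi> x \<longleftrightarrow> \<rho>' y \<le> x"
  shows "\<rho> = \<rho>'"
  by (rule ext, meson assms order.antisym order.refl)

lemma right_adjoint_unique:
  fixes \<phi> \<phi>' :: "'b::order \<Rightarrow> 'c::order"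
  assumes "\<And>x y. y \<le> \<phi> x \<longleftrightarrow> \<rho> y \<le> x" "\<And>x y. y \<le> \<phi>' x \<longleftrightarrow> \<rho> y \<le> x"
  shows "\<phi> = \<phi>'"
  by (rule ext, meson assms order.antisym order.refl)

lemma rev_adjoint_unique:
  fixes \<epsilon> \<epsilon>' :: "'b::order \<Rightarrow> 'c::order"
  assumes "\<And>x y. y \<le> \<delta> x \<longleftrightarrow> x \<le> \<epsilon> y" "\<And>x y. y \<le> \<delta> x \<longleftrightarrow> x \<le> \<epsilon>' y"
  shows "\<epsilon> = \<epsilon>'"
  by (rule ext, meson assms order.antisym order.refl)

lemma Inf_preserving_mono:
  fixes \<phi> :: "'b::complete_lattice \<Rightarrow> 'c::complete_lattice"
  assumes "\<And>M. \<phi> (Inf M) = Inf (\<phi> ` M)"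
  shows "mono \<phi>"
proof (rule monoI)
  fix x x' :: 'b assume "x \<le> x'"
  then have "\<phi> x = \<phi> (Inf {x, x'})" by (simp add: inf_absorb1)
  also have "\<dots> = inf (\<phi> x) (\<phi> x')" using assms[of "{x, x'}"] by simp
  finally show "\<phi> x \<le> \<phi> x'" by (metis inf.cobounded2)
qed

lemma Inf_preserving_left_adjoint:
  fixes \<phi> :: "'b::complete_lattice \<Rightarrow> 'c::complete_lattice"
  assumes inf: "\<And>M. \<phi> (Inf M) = Inf (\<phi> ` M)"
    and rho_eq: "\<rho> = (\<lambda>y. Inf {x. y \<le> \<phi> x})"
  shows "\<rho> y \<le> x \<longleftrightarrow> y \<le> \<phi> x"
proof
  assume "\<rho> y \<le> x"
  have "y \<le> \<phi> (\<rho> y)" unfolding rho_eq inf by (auto intro: Inf_greatest)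
  also have "\<dots> \<le> \<phi> x" using Inf_preserving_mono[OF inf] \<open>\<rho> y \<le> x\<close> by (rule monoD)
  finally show "y \<le> \<phi> x" .
next
  assume "y \<le> \<phi> x" then show "\<rho> y \<le> x" unfolding rho_eq by (auto intro: Inf_lower)
qed

lemma left_adjoint_Sup:
  fixes \<rho> :: "'b::complete_lattice \<Rightarrow> 'c::complete_lattice"
  assumes adj: "\<And>x y. \<rho> y \<le> x \<longleftrightarrow> y \<le> \<phi> x"
  shows "\<rho> (Sup M) = Sup (\<rho> ` M)"
proof -
  have "\<rho> (Sup M) \<le> x \<longleftrightarrow> Sup (\<rho> ` M) \<le> x" for x
    by (simp add: adj Sup_le_iff)
  then show ?thesis by (meson order.antisym order.refl)
qed

section \<open>Decomposition of fuzzy sets into atoms\<close>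

definition atom :: "'j \<Rightarrow> 'j \<Rightarrow> 'a::complete_residuated_lattice" where
  "atom j = (\<lambda>l. if l = j then 1 else bot)"

lemma scaled_atom: "(\<lambda>l. c * atom j l) = (\<lambda>l. if l = j then c else bot)"
  by (auto simp: atom_def mult_bot)

lemma atom_decomposition: "(y::'j \<Rightarrow> 'a::complete_residuated_lattice) = (SUP j. (\<lambda>l. y j * atom j l))"
proof (rule ext)
  fix l
  have "y l = (SUP j. if l = j then y j else bot)"
    by (rule order.antisym) (auto intro: SUP_upper2[of l] SUP_least)
  then show "y l = (SUP j. (\<lambda>l. y j * atom j l)) l"
    unfolding scaled_atom Sup_apply image_image .
qed

text \<open>\<open>\<rho>\<^sub>R\<close> is left adjoint to \<open>\<phi>\<^sub>R\<close>, and \<open>\<delta>\<^sub>R, \<epsilon>\<^sub>R\<close> form a reversed adjunction; both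
  are pointwise instances of residuation.\<close>

lemma rhoR_phiR_adjoint: "rhoR R y \<le> x \<longleftrightarrow> y \<le> phiR R x"
  by (auto simp: le_fun_def rhoR_def phiR_def SUP_le_iff le_INF_iff residuation mult.commute)

lemma deltaR_epsR_adjoint: "y \<le> deltaR R x \<longleftrightarrow> x \<le> epsR R y"
  by (auto simp: le_fun_def deltaR_def epsR_def le_INF_iff residuation[symmetric] mult.commute)

lemma epsR_eq_deltaR_transpose: "epsR R = deltaR (\<lambda>j i. R i j)"
  by (simp add: epsR_def deltaR_def fun_eq_iff)

lemma phiR_phi_type: "phi_type (phiR R)"
  unfolding phi_type_def
proof (intro conjI allI)
  show "phiR R (Inf M) = Inf (phiR R ` M)" for M
    by (auto simp: phiR_def fun_eq_iff Inf_apply image_image residuum_INF intro: INF_commute)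
  show "(\<lambda>l. d \<rightarrow>\<^sub>r phiR R x l) = phiR R (\<lambda>k. d \<rightarrow>\<^sub>r x k)" for d x
    by (simp add: phiR_def residuum_INF residuum_exchange[of d])
qed

lemma rhoR_rho_type: "rho_type (rhoR R)"
  unfolding rho_type_def
proof (intro conjI allI)
  show "rhoR R (Sup M) = Sup (rhoR R ` M)" for M
    by (auto simp: rhoR_def fun_eq_iff Sup_apply image_image mult_SUP intro: SUP_commute)
  show "(\<lambda>k. d * rhoR R x k) = rhoR R (\<lambda>l. d * x l)" for d x
    by (simp add: rhoR_def mult_SUP mult.left_commute[of d])
qed

lemma deltaR_delta_type: "delta_type (deltaR R)"
  unfolding delta_type_def
proof (intro conjI allI)
  show "deltaR R (Sup M) = Inf (deltaR R ` M)" for M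
    by (auto simp: deltaR_def fun_eq_iff Sup_apply Inf_apply image_image SUP_residuum
        intro: INF_commute)
  show "(\<lambda>l. d \<rightarrow>\<^sub>r deltaR R x l) = deltaR R (\<lambda>k. d * x k)" for d x
    by (simp add: deltaR_def residuum_INF residuum_curry)
qed

section \<open>Representation theorems\<close>

lemma rho_type_representation:
  fixes \<rho> :: "('j \<Rightarrow> 'a::complete_residuated_lattice) \<Rightarrow> ('i \<Rightarrow> 'a)"
  assumes "rho_type \<rho>"
  shows "\<rho> = rhoR (\<lambda>i j. \<rho> (atom j) i)"
proof
  have sup: "\<And>M. \<rho> (Sup M) = Sup (\<rho> ` M)"
    and scale: "\<And>d x. (\<lambda>k. d * \<rho> x k) = \<rho> (\<lambda>l. d * x l)"
    using assms unfolding rho_type_def by auto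
  fix y
  have "\<rho> y = \<rho> (SUP j. (\<lambda>l. y j * atom j l))" by (subst atom_decomposition, rule refl)
  also have "\<dots> = (SUP j. (\<lambda>k. y j * \<rho> (atom j) k))" by (simp add: sup image_image scale)
  also have "\<dots> = rhoR (\<lambda>i j. \<rho> (atom j) i) y"
    by (simp add: rhoR_def fun_eq_iff Sup_apply image_image mult.commute)
  finally show "\<rho> y = rhoR (\<lambda>i j. \<rho> (atom j) i) y" .
qed

lemma delta_type_representation:
  fixes \<delta> :: "('i \<Rightarrow> 'a::complete_residuated_lattice) \<Rightarrow> ('j \<Rightarrow> 'a)"
  assumes "delta_type \<delta>"
  shows "\<delta> = deltaR (\<lambda>i j. \<delta> (atom i) j)"
proof
  have sup: "\<And>M. \<delta> (Sup M) = Inf (\<delta> ` M)"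
    and scale: "\<And>d x. (\<lambda>l. d \<rightarrow>\<^sub>r \<delta> x l) = \<delta> (\<lambda>k. d * x k)"
    using assms unfolding delta_type_def by auto
  fix x
  have "\<delta> x = \<delta> (SUP i. (\<lambda>k. x i * atom i k))" by (subst atom_decomposition, rule refl)
  also have "\<dots> = (INF i. (\<lambda>l. x i \<rightarrow>\<^sub>r \<delta> (atom i) l))" by (simp add: sup image_image scale)
  also have "\<dots> = deltaR (\<lambda>i j. \<delta> (atom i) j) x"
    by (simp add: deltaR_def fun_eq_iff Inf_apply image_image)
  finally show "\<delta> x = deltaR (\<lambda>i j. \<delta> (atom i) j) x" .
qed

text \<open>The left adjoint of a phi-type map is rho-type: suprema are preserved by any left
  adjoint, and compatibility with scaling by \<open>d\<close> is the adjoint of compatibility of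
  \<open>\<phi>\<close> with \<open>d \<rightarrow>\<^sub>r _\<close>.\<close>

lemma phi_type_left_adjoint_rho_type:
  fixes \<phi> :: "('i \<Rightarrow> 'a::complete_residuated_lattice) \<Rightarrow> ('j \<Rightarrow> 'a)"
  assumes "phi_type \<phi>" and adj: "\<And>x y. \<rho> y \<le> x \<longleftrightarrow> y \<le> \<phi> x"
  shows "rho_type \<rho>"
proof -
  have scale: "\<And>d x. (\<lambda>l. d \<rightarrow>\<^sub>r \<phi> x l) = \<phi> (\<lambda>k. d \<rightarrow>\<^sub>r x k)"
    using assms(1) unfolding phi_type_def by auto
  have "\<rho> (\<lambda>l. d * y l) = (\<lambda>k. d * \<rho> y k)" for d y
  proof -
    have "\<rho> (\<lambda>l. d * y l) \<le> x \<longleftrightarrow> (\<lambda>k. d * \<rho> y k) \<le> x" for x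
      by (simp add: adj scale_le_iff_le_residuum scale)
    then show ?thesis by (meson order.antisym order.refl)
  qed
  then show ?thesis
    unfolding rho_type_def using left_adjoint_Sup[OF adj] by simp
qed

text \<open>Representation of phi-type maps: the relation representing the left adjoint also
  represents the map itself.\<close>

lemma phi_type_representation:
  fixes \<phi> :: "('i \<Rightarrow> 'a::complete_residuated_lattice) \<Rightarrow> ('j \<Rightarrow> 'a)"
  assumes phi: "phi_type \<phi>"
  shows "\<exists>R. \<phi> = phiR R"
proof -
  define \<rho> where "\<rho> = (\<lambda>y. Inf {x. y \<le> \<phi> x})"
  have adj: "\<rho> y \<le> x \<longleftrightarrow> y \<le> \<phi> x" for x y
    using phi unfolding phi_type_def by (intro Inf_preserving_left_adjoint[OF _ \<rho>_def]) auto
  obtain R where "\<rho> = rhoR R"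
    using rho_type_representation[OF phi_type_left_adjoint_rho_type[OF phi adj]] by blast
  then have "\<phi> = phiR R"
    by (intro right_adjoint_unique[of \<phi> "rhoR R" "phiR R"]) (use adj rhoR_phiR_adjoint in blast)+
  then show ?thesis by blast
qed

lemma phi_type_iff: "phi_type \<phi> \<longleftrightarrow> (\<exists>R. \<phi> = phiR R)"
  using phi_type_representation phiR_phi_type by blast

lemma rho_type_iff: "rho_type \<rho> \<longleftrightarrow> (\<exists>R. \<rho> = rhoR R)"
  using rho_type_representation rhoR_rho_type by blast

lemma delta_type_iff: "delta_type \<delta> \<longleftrightarrow> (\<exists>R. \<delta> = deltaR R)"
  using delta_type_representation deltaR_delta_type by blast

text \<open>For the second map of a reversed Galois connection, the relation is transposed.\<close>

lemma delta_type_iff_epsR: "delta_type \<epsilon> \<longleftrightarrow> (\<exists>R. \<epsilon> = epsR R)"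
proof
  assume "delta_type \<epsilon>"
  then obtain R where "\<epsilon> = deltaR R" by (auto simp: delta_type_iff)
  then have "\<epsilon> = epsR (\<lambda>i j. R j i)" by (simp add: epsR_eq_deltaR_transpose)
  then show "\<exists>R. \<epsilon> = epsR R" by blast
next
  assume "\<exists>R. \<epsilon> = epsR R"
  then show "delta_type \<epsilon>" by (auto simp: epsR_eq_deltaR_transpose deltaR_delta_type)
qed

lemma galois_conn_iff_relation:
  fixes \<phi> :: "('i \<Rightarrow> 'a::complete_residuated_lattice) \<Rightarrow> ('j \<Rightarrow> 'a)"
  assumes "phi_type \<phi>"
  shows "galois_conn \<phi> \<rho> \<longleftrightarrow> (\<exists>R. \<phi> = phiR R \<and> \<rho> = rhoR R)"
proof
  assume "galois_conn \<phi> \<rho>"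
  then have adj: "y \<le> \<phi> x \<longleftrightarrow> \<rho> y \<le> x" for x y by (simp add: galois_conn_iff_adjoint)
  obtain R where R: "\<phi> = phiR R" using assms phi_type_representation by blast
  have "\<rho> = rhoR R"
  proof (rule left_adjoint_unique)
    show "y \<le> \<phi> x \<longleftrightarrow> \<rho> y \<le> x" for x y by (rule adj)
    show "y \<le> \<phi> x \<longleftrightarrow> rhoR R y \<le> x" for x y unfolding R by (rule rhoR_phiR_adjoint[symmetric])
  qed
  with R show "\<exists>R. \<phi> = phiR R \<and> \<rho> = rhoR R" by blast
next
  assume "\<exists>R. \<phi> = phiR R \<and> \<rho> = rhoR R"
  then obtain R where "\<phi> = phiR R" and "\<rho> = rhoR R" by blast
  then show "galois_conn \<phi> \<rho>" unfolding galois_conn_iff_adjoint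
    using rhoR_phiR_adjoint by blast
qed

lemma rev_galois_conn_iff_relation:
  fixes \<delta> :: "('i \<Rightarrow> 'a::complete_residuated_lattice) \<Rightarrow> ('j \<Rightarrow> 'a)"
  assumes "delta_type \<delta>"
  shows "rev_galois_conn \<delta> \<epsilon> \<longleftrightarrow> (\<exists>R. \<delta> = deltaR R \<and> \<epsilon> = epsR R)"
proof
  assume "rev_galois_conn \<delta> \<epsilon>"
  then have adj: "y \<le> \<delta> x \<longleftrightarrow> x \<le> \<epsilon> y" for x y by (simp add: rev_galois_conn_iff_adjoint)
  obtain R where R: "\<delta> = deltaR R" using assms delta_type_iff by blast
  have "\<epsilon> = epsR R"
  proof (rule rev_adjoint_unique)
    show "y \<le> \<delta> x \<longleftrightarrow> x \<le> \<epsilon> y" for x y by (rule adj)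
    show "y \<le> \<delta> x \<longleftrightarrow> x \<le> epsR R y" for x y unfolding R by (rule deltaR_epsR_adjoint)
  qed
  with R show "\<exists>R. \<delta> = deltaR R \<and> \<epsilon> = epsR R" by blast
next
  assume "\<exists>R. \<delta> = deltaR R \<and> \<epsilon> = epsR R"
  then obtain R where "\<delta> = deltaR R" and "\<epsilon> = epsR R" by blast
  then show "rev_galois_conn \<delta> \<epsilon>" unfolding rev_galois_conn_iff_adjoint
    using deltaR_epsR_adjoint by blast
qed

theorem theorem3:
  fixes dummy :: "'i \<Rightarrow> 'j \<Rightarrow> 'a::complete_residuated_lattice"
  shows
   "(\<forall>\<phi> :: ('i \<Rightarrow> 'a) \<Rightarrow> ('j \<Rightarrow> 'a). phi_type \<phi> \<longleftrightarrow> (\<exists>R. \<phi> = phiR R))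
  \<and> (\<forall>\<rho> :: ('j \<Rightarrow> 'a) \<Rightarrow> ('i \<Rightarrow> 'a). rho_type \<rho> \<longleftrightarrow> (\<exists>R. \<rho> = rhoR R))
  \<and> (\<forall>(\<phi> :: ('i \<Rightarrow> 'a) \<Rightarrow> ('j \<Rightarrow> 'a)) (\<rho> :: ('j \<Rightarrow> 'a) \<Rightarrow> ('i \<Rightarrow> 'a)).
        phi_type \<phi> \<and> rho_type \<rho> \<longrightarrow>
        (galois_conn \<phi> \<rho> \<longleftrightarrow> (\<exists>R. \<phi> = phiR R \<and> \<rho> = rhoR R)))
  \<and> (\<forall>\<delta> :: ('i \<Rightarrow> 'a) \<Rightarrow> ('j \<Rightarrow> 'a). delta_type \<delta> \<longleftrightarrow> (\<exists>R. \<delta> = deltaR R))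
  \<and> (\<forall>\<epsilon> :: ('j \<Rightarrow> 'a) \<Rightarrow> ('i \<Rightarrow> 'a). delta_type \<epsilon> \<longleftrightarrow> (\<exists>R. \<epsilon> = epsR R))
  \<and> (\<forall>(\<delta> :: ('i \<Rightarrow> 'a) \<Rightarrow> ('j \<Rightarrow> 'a)) (\<epsilon> :: ('j \<Rightarrow> 'a) \<Rightarrow> ('i \<Rightarrow> 'a)).
        delta_type \<delta> \<and> delta_type \<epsilon> \<longrightarrow>
        (rev_galois_conn \<delta> \<epsilon> \<longleftrightarrow> (\<exists>R. \<delta> = deltaR R \<and> \<epsilon> = epsR R)))"
proof (intro conjI allI impI)
  show "phi_type \<phi> \<longleftrightarrow> (\<exists>R. \<phi> = phiR R)" for \<phi> :: "('i \<Rightarrow> 'a) \<Rightarrow> ('j \<Rightarrow> 'a)"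
    by (rule phi_type_iff)
  show "rho_type \<rho> \<longleftrightarrow> (\<exists>R. \<rho> = rhoR R)" for \<rho> :: "('j \<Rightarrow> 'a) \<Rightarrow> ('i \<Rightarrow> 'a)"
    by (rule rho_type_iff)
  show "delta_type \<delta> \<longleftrightarrow> (\<exists>R. \<delta> = deltaR R)" for \<delta> :: "('i \<Rightarrow> 'a) \<Rightarrow> ('j \<Rightarrow> 'a)"
    by (rule delta_type_iff)
  show "delta_type \<epsilon> \<longleftrightarrow> (\<exists>R. \<epsilon> = epsR R)" for \<epsilon> :: "('j \<Rightarrow> 'a) \<Rightarrow> ('i \<Rightarrow> 'a)"
    by (rule delta_type_iff_epsR)
  show "galois_conn \<phi> \<rho> \<longleftrightarrow> (\<exists>R. \<phi> = phiR R \<and> \<rho> = rhoR R)"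
    if "phi_type \<phi> \<and> rho_type \<rho>" for \<phi> :: "('i \<Rightarrow> 'a) \<Rightarrow> ('j \<Rightarrow> 'a)" and \<rho>
    using that by (simp add: galois_conn_iff_relation)
  show "rev_galois_conn \<delta> \<epsilon> \<longleftrightarrow> (\<exists>R. \<delta> = deltaR R \<and> \<epsilon> = epsR R)"
    if "delta_type \<delta> \<and> delta_type \<epsilon>" for \<delta> :: "('i \<Rightarrow> 'a) \<Rightarrow> ('j \<Rightarrow> 'a)" and \<epsilon>
    using that by (simp add: rev_galois_conn_iff_relation)
qed

end
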